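(* Let $k\ge 2$ be even, let $\mathscr{A}\in\mathbb{R}^{n\times n\times\cdots\times n}$ be a $k$th-order $n$-dimensional tensor and $\mathbf{B}\in\mathbb{R}^{n\times m}$, and consider the system $\dot{\mathbf{x}}(t)=\mathscr{A}\mathbf{x}(t)^{k-1}+\mathbf{B}\mathbf{u}(t)$. (i) If the pair $(\mathscr{A},\mathbf{B})$ is controllable, then there exists $\varepsilon>0$ such that every pair $(\tilde{\mathscr{A}},\tilde{\mathbf{B}})$ (of the same sizes) with $\|\tilde{\mathscr{A}}-\mathscr{A}\|<\varepsilon$ and $\|\tilde{\mathbf{B}}-\mathbf{B}\|<\varepsilon$ is also controllable. (ii) If $(\mathscr{A},\mathbf{B})$ is not controllable, then for every $\varepsilon>0$ there exists a controllable pair $(\tilde{\mathscr{A}},\tilde{\mathbf{B}})$ with $\|\tilde{\mathscr{A}}-\mathscr{A}\|<\varepsilon$ and $\|\tilde{\mathbf{B}}-\mathbf{B}\|<\varepsilon$.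
   Context: For a $k$th-order tensor $\mathscr{A}$ and vectors $\mathbf{v}_1,\dots,\mathbf{v}_{k-1}\in\mathbb{R}^n$, $\mathscr{A}\mathbf{v}_1\mathbf{v}_2\cdots\mathbf{v}_{k-1}\in\mathbb{R}^n$ denotes the vector with entries $\sum_{j_2,\dots,j_k}\mathscr{A}_{i j_2\cdots j_k}(\mathbf{v}_1)_{j_2}\cdots(\mathbf{v}_{k-1})_{j_k}$, and $\mathscr{A}\mathbf{x}^{k-1}$ is this with all $\mathbf{v}_i=\mathbf{x}$. Norms are standard (e.g. Frobenius) norms on tensors and matrices. The nonlinear controllability matrix of $(\mathscr{A},\mathbf{B})$ is $\mathbf{C}=[\mathbf{M}_0\ \mathbf{M}_1\ \cdots\ \mathbf{M}_{n-1}]$, where $\mathbf{M}_0=\mathbf{B}$ and, for $j=1,\dots,n-1$, the columns of $\mathbf{M}_j$ are formed from the set $\{\mathscr{A}\mathbf{v}_1\mathbf{v}_2\cdots\mathbf{v}_{k-1} : \mathbf{v}_i\in\operatorname{span}[\mathbf{M}_0\ \cdots\ \mathbf{M}_{j-1}],\ i=1,\dots,k-1\}$ (so that the column span of $\mathbf{C}$ equals the span of all such vectors generated iteratively). The pair $(\mathscr{A},\mathbf{B})$ (equivalently the system) is called controllable (strongly controllable) if $\operatorname{rank}\mathbf{C}=n$. *)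

theory Defs
  imports "HOL-Analysis.Analysis"
begin

text \<open>A kth-order n-dimensional real tensor is represented as a function on index lists
  (entries are only ever read at lists of length k over the index type 'n).\<close>
type_synonym 'n tensor = "'n list \<Rightarrow> real"

definition tnorm :: "nat \<Rightarrow> ('n::finite) tensor \<Rightarrow> real" where
  "tnorm k A = sqrt (\<Sum>js\<in>{js. length js = k}. (A js)\<^sup>2)"

definition tapply :: "nat \<Rightarrow> ('n::finite) tensor \<Rightarrow> (real^'n) list \<Rightarrow> real^'n" where
  "tapply k A vs = (\<chi> i. \<Sum>js\<in>{js. length js = k - 1}.
      A (i # js) * (\<Prod>l<k - 1. (vs ! l) $ (js ! l)))"

text \<open>Column span of [M_0 ... M_j] of the nonlinear controllability matrix.\<close>
primrec ctrl_space :: "nat \<Rightarrow> ('n::finite) tensor \<Rightarrow> real^'m::finite^'n \<Rightarrow> nat \<Rightarrow> (real^'n) set" where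
  "ctrl_space k A B 0 = span (range (\<lambda>j. column j B))"
| "ctrl_space k A B (Suc j) = span (ctrl_space k A B j \<union>
      {tapply k A vs | vs. length vs = k - 1 \<and> set vs \<subseteq> ctrl_space k A B j})"

definition controllable :: "nat \<Rightarrow> ('n::finite) tensor \<Rightarrow> real^'m::finite^'n \<Rightarrow> bool" where
  "controllable k A B \<longleftrightarrow> dim (ctrl_space k A B (CARD('n) - 1)) = CARD('n)"

end

(*
  The j-th controllability space is exactly the set of values at (A, B) of formal expressions
  built from the columns of B by linear combinations and by applying the tensor to (k-1)-tuples
  of expressions of depth less than j.  Hence (A, B) is controllable iff some n such expressions
  evaluate to the rows of a matrix with nonzero determinant.  For fixed expressions this
  determinant is built from the entries of A and B by sums and products only.  So it depends
  continuously on (A, B), which gives openness; and along the segment from (A, B) to a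
  controllable pair (a shift tensor provides one) it is a nonzero polynomial in the parameter,
  so it vanishes only finitely often, which gives density.
*)
theory Submission
  imports Defs "HOL-Computational_Algebra.Polynomial"
begin

section \<open>Controllability spaces as values of expressions\<close>

datatype 'm ctrl_expr = Col 'm | Zero | Comb real "'m ctrl_expr" "'m ctrl_expr" | App "'m ctrl_expr list"

fun eval_ctrl_expr :: "nat \<Rightarrow> ('n::finite) tensor \<Rightarrow> real^'m::finite^'n \<Rightarrow> 'm ctrl_expr \<Rightarrow> real^'n" where
  "eval_ctrl_expr k A B (Col c) = column c B"
| "eval_ctrl_expr k A B Zero = 0"
| "eval_ctrl_expr k A B (Comb c e1 e2) = c *\<^sub>R eval_ctrl_expr k A B e1 + eval_ctrl_expr k A B e2"
| "eval_ctrl_expr k A B (App es) = tapply k A (map (eval_ctrl_expr k A B) es)"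

fun wf_ctrl_expr :: "nat \<Rightarrow> nat \<Rightarrow> 'm ctrl_expr \<Rightarrow> bool" where
  "wf_ctrl_expr k j (Col c) = True"
| "wf_ctrl_expr k j Zero = True"
| "wf_ctrl_expr k j (Comb c e1 e2) = (wf_ctrl_expr k j e1 \<and> wf_ctrl_expr k j e2)"
| "wf_ctrl_expr k 0 (App es) = False"
| "wf_ctrl_expr k (Suc j) (App es) = (length es = k - 1 \<and> (\<forall>e\<in>set es. wf_ctrl_expr k j e))"

lemma wf_ctrl_expr_Suc: "wf_ctrl_expr k j e \<Longrightarrow> wf_ctrl_expr k (Suc j) e"
proof (induction e arbitrary: j)
  case (App es)
  then show ?case by (cases j) auto
qed auto

lemma ctrl_space_mono: "j \<le> j' \<Longrightarrow> ctrl_space k A B j \<subseteq> ctrl_space k A B j'"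
  by (induction j' rule: dec_induct) (auto intro: span_base)

lemma subspace_ctrl_space: "subspace (ctrl_space k A B j)"
  by (cases j) auto

lemma eval_ctrl_expr_in_ctrl_space:
  "wf_ctrl_expr k j e \<Longrightarrow> eval_ctrl_expr k A B e \<in> ctrl_space k A B j"
proof (induction e arbitrary: j)
  case (Col c)
  have "column c B \<in> ctrl_space k A B 0" by (auto intro: span_base)
  then show ?case using ctrl_space_mono[of 0 j] by auto
next
  case Zero
  show ?case using subspace_ctrl_space[of k A B j] by (simp add: subspace_0)
next
  case (Comb c e1 e2)
  then show ?case using subspace_ctrl_space[of k A B j]
    by (auto intro!: subspace_add subspace_scale)
next
  case (App es)
  then obtain j' where j: "j = Suc j'" by (cases j) auto
  with App have "tapply k A (map (eval_ctrl_expr k A B) es)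
      \<in> {tapply k A vs | vs. length vs = k - 1 \<and> set vs \<subseteq> ctrl_space k A B j'}"
    by (intro CollectI exI[of _ "map (eval_ctrl_expr k A B) es"]) auto
  then show ?case using j by (auto intro: span_base)
qed

lemma subspace_eval_ctrl_expr: "subspace {eval_ctrl_expr k A B e |e. wf_ctrl_expr k j e}"
  unfolding subspace_def
proof (intro conjI ballI allI)
  show "0 \<in> {eval_ctrl_expr k A B e |e. wf_ctrl_expr k j e}"
    by (auto intro!: exI[of _ Zero])
next
  fix x y assume "x \<in> {eval_ctrl_expr k A B e |e. wf_ctrl_expr k j e}"
    and "y \<in> {eval_ctrl_expr k A B e |e. wf_ctrl_expr k j e}"
  then obtain e1 e2 where "x = eval_ctrl_expr k A B e1" "wf_ctrl_expr k j e1"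
    and "y = eval_ctrl_expr k A B e2" "wf_ctrl_expr k j e2" by blast
  then show "x + y \<in> {eval_ctrl_expr k A B e |e. wf_ctrl_expr k j e}"
    by (auto intro!: exI[of _ "Comb 1 e1 e2"])
next
  fix c x assume "x \<in> {eval_ctrl_expr k A B e |e. wf_ctrl_expr k j e}"
  then obtain e where "x = eval_ctrl_expr k A B e" "wf_ctrl_expr k j e" by blast
  then show "c *\<^sub>R x \<in> {eval_ctrl_expr k A B e |e. wf_ctrl_expr k j e}"
    by (auto intro!: exI[of _ "Comb c e Zero"])
qed

lemma ctrl_space_eq_eval_ctrl_expr:
  "ctrl_space k A B j = {eval_ctrl_expr k A B e |e. wf_ctrl_expr k j e}"
proof
  show "{eval_ctrl_expr k A B e |e. wf_ctrl_expr k j e} \<subseteq> ctrl_space k A B j"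
    using eval_ctrl_expr_in_ctrl_space by blast
  show "ctrl_space k A B j \<subseteq> {eval_ctrl_expr k A B e |e. wf_ctrl_expr k j e}"
  proof (induction j)
    case 0
    show ?case
      by (simp, rule span_minimal[OF _ subspace_eval_ctrl_expr]) (auto intro!: exI[of _ "Col _"])
  next
    case (Suc j)
    have "tapply k A vs \<in> {eval_ctrl_expr k A B e |e. wf_ctrl_expr k (Suc j) e}"
      if "length vs = k - 1" and "set vs \<subseteq> ctrl_space k A B j" for vs
    proof -
      from that Suc have "\<forall>v\<in>set vs. \<exists>e. wf_ctrl_expr k j e \<and> eval_ctrl_expr k A B e = v"
        by blast
      then obtain expr where "\<forall>v\<in>set vs. wf_ctrl_expr k j (expr v) \<and> eval_ctrl_expr k A B (expr v) = v"
        by metis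
      with that show ?thesis
        by (auto intro!: exI[of _ "App (map expr vs)"] simp: map_idI)
    qed
    with Suc show ?case
      unfolding ctrl_space.simps
      by (intro span_minimal[OF _ subspace_eval_ctrl_expr]) (blast intro: wf_ctrl_expr_Suc)
  qed
qed

lemma controllable_iff_ctrl_space_UNIV:
  "controllable k A B \<longleftrightarrow> ctrl_space k A B (CARD('n) - 1) = (UNIV :: (real^'n::finite) set)"
proof -
  have "controllable k A B \<longleftrightarrow> span (ctrl_space k A B (CARD('n) - 1)) = UNIV"
    unfolding controllable_def using dim_eq_full[of "ctrl_space k A B (CARD('n) - 1)"] by simp
  also have "span (ctrl_space k A B (CARD('n) - 1)) = ctrl_space k A B (CARD('n) - 1)"
    by (rule span_eq_iff[THEN iffD2, OF subspace_ctrl_space])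
  finally show ?thesis .
qed

lemma controllable_iff_det:
  fixes A :: "('n::finite) tensor" and B :: "real^'m::finite^'n"
  shows "controllable k A B \<longleftrightarrow>
    (\<exists>E. (\<forall>i. wf_ctrl_expr k (CARD('n) - 1) (E i)) \<and> det (\<chi> i. eval_ctrl_expr k A B (E i)) \<noteq> 0)"
proof
  assume "controllable k A B"
  then have "axis i 1 \<in> ctrl_space k A B (CARD('n) - 1)" for i
    unfolding controllable_iff_ctrl_space_UNIV by simp
  then have "\<forall>i::'n. \<exists>e. wf_ctrl_expr k (CARD('n) - 1) e \<and> eval_ctrl_expr k A B e = axis i 1"
    unfolding ctrl_space_eq_eval_ctrl_expr by (simp, metis)
  then obtain E where E: "\<forall>i. wf_ctrl_expr k (CARD('n) - 1) (E i)"
    and "\<forall>i. eval_ctrl_expr k A B (E i) = axis i 1" by metis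
  then have "(\<chi> i. eval_ctrl_expr k A B (E i)) = mat 1"
    by (simp add: vec_eq_iff axis_def mat_def)
  with E show "\<exists>E. (\<forall>i. wf_ctrl_expr k (CARD('n) - 1) (E i)) \<and> det (\<chi> i. eval_ctrl_expr k A B (E i)) \<noteq> 0"
    by (auto intro!: exI[of _ E])
next
  assume "\<exists>E. (\<forall>i. wf_ctrl_expr k (CARD('n) - 1) (E i)) \<and> det (\<chi> i. eval_ctrl_expr k A B (E i)) \<noteq> 0"
  then obtain E where E: "\<forall>i. wf_ctrl_expr k (CARD('n) - 1) (E i)"
    and "det (\<chi> i. eval_ctrl_expr k A B (E i)) \<noteq> 0" by blast
  then have "invertible (\<chi> i. eval_ctrl_expr k A B (E i))"
    by (simp add: invertible_det_nz)
  then have "span (rows (\<chi> i. eval_ctrl_expr k A B (E i))) = UNIV"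
    unfolding invertible_def matrix_left_invertible_span_rows[symmetric] by blast
  moreover have "rows (\<chi> i. eval_ctrl_expr k A B (E i)) \<subseteq> ctrl_space k A B (CARD('n) - 1)"
    using E by (auto simp: rows_def row_def intro: eval_ctrl_expr_in_ctrl_space)
  ultimately show "controllable k A B"
    unfolding controllable_iff_ctrl_space_UNIV
    using span_minimal[OF _ subspace_ctrl_space] by blast
qed

locale ring_closed =
  fixes P :: "('x \<Rightarrow> real) \<Rightarrow> bool"
  assumes closed_const: "P (\<lambda>_. c)"
    and closed_add: "P f \<Longrightarrow> P g \<Longrightarrow> P (\<lambda>x. f x + g x)"
    and closed_mult: "P f \<Longrightarrow> P g \<Longrightarrow> P (\<lambda>x. f x * g x)"
begin

lemma closed_sum: "(\<And>a. a \<in> S \<Longrightarrow> P (f a)) \<Longrightarrow> P (\<lambda>x. \<Sum>a\<in>S. f a x)"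
  by (induction S rule: infinite_finite_induct) (auto intro: closed_const closed_add)

lemma closed_prod: "(\<And>a. a \<in> S \<Longrightarrow> P (f a)) \<Longrightarrow> P (\<lambda>x. \<Prod>a\<in>S. f a x)"
  by (induction S rule: infinite_finite_induct) (auto intro: closed_const closed_mult)

lemma closed_det: "(\<And>i j. P (\<lambda>x. M x $ i $ j)) \<Longrightarrow> P (\<lambda>x. det (M x))"
  unfolding det_def by (intro closed_sum closed_mult closed_prod closed_const)

lemma closed_eval_ctrl_expr:
  fixes At :: "'x \<Rightarrow> ('n::finite) tensor" and Bt :: "'x \<Rightarrow> real^'m::finite^'n"
  assumes "0 < k"
    and entries_A: "\<And>js. length js = k \<Longrightarrow> P (\<lambda>x. At x js)"
    and entries_B: "\<And>i c. P (\<lambda>x. Bt x $ i $ c)"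
  shows "wf_ctrl_expr k j e \<Longrightarrow> P (\<lambda>x. eval_ctrl_expr k (At x) (Bt x) e $ i)"
proof (induction e arbitrary: j i)
  case (Col c)
  show ?case using entries_B by (simp add: column_def)
next
  case Zero
  show ?case using closed_const by simp
next
  case (Comb c e1 e2)
  then show ?case by (auto intro!: closed_add closed_mult closed_const)
next
  case (App es)
  then obtain j' where "j = Suc j'" by (cases j) auto
  with App.prems have len: "length es = k - 1" and wf: "\<forall>e\<in>set es. wf_ctrl_expr k j' e" by auto
  have "P (\<lambda>x. map (eval_ctrl_expr k (At x) (Bt x)) es ! l $ i')" if "l < k - 1" for l i'
    using App.IH[of "es ! l" j' i'] wf len that by auto
  then show ?case
    using len \<open>0 < k\<close> unfolding eval_ctrl_expr.simps tapply_def vec_lambda_beta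
    by (intro closed_sum closed_mult closed_prod entries_A) auto
qed

end

lemma ring_closed_tendsto: "ring_closed (\<lambda>f. (f \<longlongrightarrow> f x0) F)"
  by unfold_locales (auto intro: tendsto_add tendsto_mult)

lemma ring_closed_poly: "ring_closed (\<lambda>f. \<exists>p. f = poly p)"
proof
  show "\<exists>p. (\<lambda>_::real. c) = poly p" for c
    by (intro exI[of _ "[:c:]"]) auto
  fix f g :: "real \<Rightarrow> real"
  assume "\<exists>p. f = poly p" and "\<exists>p. g = poly p"
  then obtain p q where "f = poly p" and "g = poly q" by blast
  then show "\<exists>r. (\<lambda>x. f x + g x) = poly r"
    by (auto intro!: exI[of _ "p + q"] simp: fun_eq_iff)
  from \<open>f = poly p\<close> \<open>g = poly q\<close> show "\<exists>r. (\<lambda>x. f x * g x) = poly r"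
    by (auto intro!: exI[of _ "p * q"] simp: fun_eq_iff)
qed

section \<open>Openness of controllability\<close>

lemma finite_lists_length_eq_UNIV: "finite {xs :: ('a::finite) list. length xs = n}"
  using finite_lists_length_eq[of "UNIV :: 'a set" n] by simp

lemma abs_le_tnorm: "length js = k \<Longrightarrow> \<bar>D js\<bar> \<le> tnorm k D"
  unfolding tnorm_def
  by (rule real_le_rsqrt, subst power2_abs)
    (auto intro: member_le_sum simp: finite_lists_length_eq_UNIV)

definition pair_nhds :: "nat \<Rightarrow> ('n::finite) tensor \<Rightarrow> real^'m::finite^'n \<Rightarrow> ('n tensor \<times> (real^'m^'n)) filter"
  where "pair_nhds k A B =
    (INF \<epsilon>\<in>{0<..}. principal {(A', B'). tnorm k (\<lambda>js. A' js - A js) < \<epsilon> \<and> norm (B' - B) < \<epsilon>})"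

lemma eventually_pair_nhds:
  "eventually P (pair_nhds k A B) \<longleftrightarrow>
    (\<exists>\<epsilon>>0. \<forall>A' B'. tnorm k (\<lambda>js. A' js - A js) < \<epsilon> \<and> norm (B' - B) < \<epsilon> \<longrightarrow> P (A', B'))"
  unfolding pair_nhds_def
proof (subst eventually_INF_base)
  show "\<exists>\<gamma>\<in>{0<..}. principal {(A', B'). tnorm k (\<lambda>js. A' js - A js) < \<gamma> \<and> norm (B' - B) < \<gamma>}
      \<le> inf (principal {(A', B'). tnorm k (\<lambda>js. A' js - A js) < \<alpha> \<and> norm (B' - B) < \<alpha>})
            (principal {(A', B'). tnorm k (\<lambda>js. A' js - A js) < \<beta> \<and> norm (B' - B) < \<beta>})"
    if "\<alpha> \<in> {0<..}" and "\<beta> \<in> {0<..}" for \<alpha> \<beta> :: real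
    using that by (intro bexI[of _ "min \<alpha> \<beta>"]) auto
qed (auto simp: eventually_principal)

lemma tendsto_tensor_entry_pair_nhds:
  fixes A :: "('n::finite) tensor" and B :: "real^'m::finite^'n"
  assumes "length js = k"
  shows "((\<lambda>x. fst x js) \<longlongrightarrow> A js) (pair_nhds k A B)"
proof (rule tendstoI)
  fix e :: real assume "0 < e"
  show "eventually (\<lambda>x. dist (fst x js) (A js) < e) (pair_nhds k A B)"
    unfolding eventually_pair_nhds
  proof (intro exI[of _ e] conjI allI impI)
    fix A' B' assume "tnorm k (\<lambda>js. A' js - A js) < e \<and> norm (B' - B) < e"
    then show "dist (fst (A', B') js) (A js) < e"
      using abs_le_tnorm[OF assms, of "\<lambda>js. A' js - A js"] by (simp add: dist_real_def)
  qed (rule \<open>0 < e\<close>)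
qed

lemma tendsto_matrix_entry_pair_nhds:
  fixes A :: "('n::finite) tensor" and B :: "real^'m::finite^'n"
  shows "((\<lambda>x. snd x $ i $ c) \<longlongrightarrow> B $ i $ c) (pair_nhds k A B)"
proof (rule tendstoI)
  fix e :: real assume "0 < e"
  show "eventually (\<lambda>x. dist (snd x $ i $ c) (B $ i $ c) < e) (pair_nhds k A B)"
    unfolding eventually_pair_nhds
  proof (intro exI[of _ e] conjI allI impI)
    fix A' and B' :: "real^'m^'n"
    assume "tnorm k (\<lambda>js. A' js - A js) < e \<and> norm (B' - B) < e"
    moreover have "\<bar>(B' - B) $ i $ c\<bar> \<le> norm (B' - B)"
      using component_le_norm_cart[of "(B' - B) $ i" c]
        Finite_Cartesian_Product.norm_nth_le[of "B' - B" i]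
      by simp
    ultimately show "dist (snd (A', B') $ i $ c) (B $ i $ c) < e"
      by (simp add: dist_real_def)
  qed (rule \<open>0 < e\<close>)
qed

lemma controllable_open:
  fixes A :: "('n::finite) tensor" and B :: "real^'m::finite^'n"
  assumes "0 < k" and "controllable k A B"
  shows "\<exists>\<epsilon>>0. \<forall>A' B'. tnorm k (\<lambda>js. A' js - A js) < \<epsilon> \<and> norm (B' - B) < \<epsilon> \<longrightarrow> controllable k A' B'"
proof -
  obtain E where E: "\<forall>i. wf_ctrl_expr k (CARD('n) - 1) (E i)"
    and det_nz: "det (\<chi> i. eval_ctrl_expr k A B (E i)) \<noteq> 0"
    using assms(2) controllable_iff_det by blast
  interpret ring_closed "\<lambda>f. (f \<longlongrightarrow> f (A, B)) (pair_nhds k A B)"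
    by (rule ring_closed_tendsto)
  have "((\<lambda>x. fst x js) \<longlongrightarrow> fst (A, B) js) (pair_nhds k A B)" if "length js = k" for js
    using tendsto_tensor_entry_pair_nhds[OF that] by simp
  moreover have "((\<lambda>x. snd x $ i $ c) \<longlongrightarrow> snd (A, B) $ i $ c) (pair_nhds k A B)" for i c
    using tendsto_matrix_entry_pair_nhds by simp
  ultimately have "((\<lambda>x. eval_ctrl_expr k (fst x) (snd x) (E i) $ j)
      \<longlongrightarrow> eval_ctrl_expr k A B (E i) $ j) (pair_nhds k A B)" for i j
    using closed_eval_ctrl_expr[OF assms(1), of fst snd "CARD('n) - 1" "E i" j] E by simp
  then have "((\<lambda>x. det (\<chi> i. eval_ctrl_expr k (fst x) (snd x) (E i)))
      \<longlongrightarrow> det (\<chi> i. eval_ctrl_expr k A B (E i))) (pair_nhds k A B)"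
    using closed_det[of "\<lambda>x. \<chi> i. eval_ctrl_expr k (fst x) (snd x) (E i)"] by simp
  then have "eventually (\<lambda>x. det (\<chi> i. eval_ctrl_expr k (fst x) (snd x) (E i)) \<noteq> 0) (pair_nhds k A B)"
    using det_nz by (rule tendsto_imp_eventually_ne)
  then have "eventually (\<lambda>x. controllable k (fst x) (snd x)) (pair_nhds k A B)"
    by (rule eventually_mono) (use E controllable_iff_det in blast)
  then show ?thesis
    unfolding eventually_pair_nhds by simp
qed

section \<open>Density of controllability\<close>

lemma tapply_replicate_axis:
  "tapply k A (replicate (k - 1) (axis a 1)) = (\<chi> i. A (i # replicate (k - 1) a))"
proof -
  have prod: "(\<Prod>l<k - 1. replicate (k - 1) (axis a 1) ! l $ (js ! l))
      = (if js = replicate (k - 1) a then 1 else (0::real))"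
    if "length js = k - 1" for js
  proof (cases "js = replicate (k - 1) a")
    case False
    with that obtain l where "l < k - 1" and "js ! l \<noteq> a"
      by (metis list_eq_iff_nth_eq length_replicate nth_replicate)
    with False show ?thesis
      by (simp, intro prod_zero bexI[of _ l]) (auto simp: axis_def)
  qed (simp add: axis_def)
  have "tapply k A (replicate (k - 1) (axis a 1)) $ i
      = (\<Sum>js\<in>{js. length js = k - 1}. if js = replicate (k - 1) a then A (i # js) else 0)" for i
    unfolding tapply_def vec_lambda_beta by (intro sum.cong refl, subst prod) auto
  then show ?thesis
    by (simp add: vec_eq_iff finite_lists_length_eq_UNIV)
qed

lemma ex_controllable:
  assumes "2 \<le> k"
  shows "\<exists>(A::('n::finite) tensor) (B::real^'m::finite^'n). controllable k A B"
proof -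
  obtain h :: "nat \<Rightarrow> 'n" where h: "bij_betw h {..<CARD('n)} UNIV"
    using ex_bij_betw_nat_finite[of "UNIV :: 'n set"] by (auto simp: lessThan_atLeast0)
  \<comment> \<open>A sends the (k-1)-fold tuple of e_(h r) to e_(h (r+1)) and every column of B is e_(h 0),
    so the r-th space contains e_(h r).\<close>
  define B :: "real^'m^'n" where "B = (\<chi> i c. if i = h 0 then 1 else 0)"
  define A :: "'n tensor" where
    "A js = (if \<exists>r. Suc r < CARD('n) \<and> js = h (Suc r) # replicate (k - 1) (h r) then 1 else 0)" for js
  have A_shift: "A (i # replicate (k - 1) (h r)) = (if i = h (Suc r) then 1 else 0)"
    if "Suc r < CARD('n)" for i r
  proof -
    have "replicate (k - 1) (h r) = replicate (k - 1) (h r') \<longleftrightarrow> r = r'"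
      if "Suc r' < CARD('n)" for r'
      using assms \<open>Suc r < CARD('n)\<close> that bij_betw_imp_inj_on[OF h]
      by (auto dest: inj_onD)
    with that show ?thesis
      unfolding A_def by auto
  qed
  have axis_in: "axis (h r) 1 \<in> ctrl_space k A B r" if "r < CARD('n)" for r
    using that
  proof (induction r)
    case 0
    have "column undefined B = axis (h 0) 1"
      by (simp add: B_def column_def axis_def vec_eq_iff)
    then show ?case by (metis ctrl_space.simps(1) rangeI span_base)
  next
    case (Suc r)
    have "axis (h (Suc r)) 1 = tapply k A (replicate (k - 1) (axis (h r) 1))"
      using A_shift[OF Suc.prems] unfolding tapply_replicate_axis by (simp add: axis_def vec_eq_iff)
    with Suc show ?case by (auto intro!: span_base)
  qed
  have "axis i 1 \<in> ctrl_space k A B (CARD('n) - 1)" for i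
  proof -
    obtain r where r: "r < CARD('n)" and "i = h r"
      using bij_betw_imp_surj_on[OF h] by (metis UNIV_I imageE lessThan_iff)
    then have "r \<le> CARD('n) - 1" by simp
    with r \<open>i = h r\<close> show ?thesis
      using axis_in ctrl_space_mono by blast
  qed
  then have "Basis \<subseteq> ctrl_space k A B (CARD('n) - 1)"
    by (auto simp: Basis_vec_def)
  then have "ctrl_space k A B (CARD('n) - 1) = UNIV"
    using span_minimal[OF _ subspace_ctrl_space] span_Basis by blast
  then show ?thesis
    unfolding controllable_iff_ctrl_space_UNIV by blast
qed

lemma eventually_poly_nonzero_at:
  fixes p :: "'a::real_normed_field poly"
  assumes "p \<noteq> 0"
  shows "eventually (\<lambda>t. poly p t \<noteq> 0) (at x within S)"
proof (rule filter_leD[OF at_le[OF subset_UNIV]])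
  show "eventually (\<lambda>t. poly p t \<noteq> 0) (at x)"
    using islimpt_finite[OF poly_roots_finite[OF assms]] unfolding islimpt_iff_eventually by simp
qed

lemma tnorm_scale: "tnorm k (\<lambda>js. c * D js) = \<bar>c\<bar> * tnorm k D"
  unfolding tnorm_def
  by (simp add: power_mult_distrib sum_distrib_left[symmetric] real_sqrt_mult)

lemma poly_det_eval_ctrl_expr_segment:
  fixes A A1 :: "('n::finite) tensor" and B B1 :: "real^'m::finite^'n"
  assumes "0 < k" and "\<forall>i. wf_ctrl_expr k j (E i)"
  shows "\<exists>p. (\<lambda>t. det (\<chi> i. eval_ctrl_expr k (\<lambda>js. A js + t * (A1 js - A js))
                                   (B + t *\<^sub>R (B1 - B)) (E i))) = poly p"
proof -
  interpret ring_closed "\<lambda>f::real \<Rightarrow> real. \<exists>p. f = poly p"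
    by (rule ring_closed_poly)
  have id: "\<exists>p. (\<lambda>t::real. t) = poly p"
    by (intro exI[of _ "[:0, 1::real:]"]) (simp add: fun_eq_iff)
  have affine: "\<exists>p. (\<lambda>t. a + t * b) = poly p" for a b :: real
    by (rule closed_add[OF closed_const closed_mult[OF id closed_const]])
  have "\<exists>p. (\<lambda>t. eval_ctrl_expr k (\<lambda>js. A js + t * (A1 js - A js)) (B + t *\<^sub>R (B1 - B)) (E i) $ l)
      = poly p" for i l
    using closed_eval_ctrl_expr[of k "\<lambda>t js. A js + t * (A1 js - A js)" "\<lambda>t. B + t *\<^sub>R (B1 - B)"
        j "E i" l] assms affine by simp
  then show ?thesis
    by (intro closed_det) simp
qed

lemma controllable_dense:
  fixes A :: "('n::finite) tensor" and B :: "real^'m::finite^'n"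
  assumes "2 \<le> k" and "0 < \<epsilon>"
  shows "\<exists>A' B'. tnorm k (\<lambda>js. A' js - A js) < \<epsilon> \<and> norm (B' - B) < \<epsilon> \<and> controllable k A' B'"
proof -
  obtain A1 :: "'n tensor" and B1 :: "real^'m^'n" where "controllable k A1 B1"
    using ex_controllable[OF assms(1)] by blast
  then obtain E where E: "\<forall>i. wf_ctrl_expr k (CARD('n) - 1) (E i)"
    and det_nz: "det (\<chi> i. eval_ctrl_expr k A1 B1 (E i)) \<noteq> 0"
    using controllable_iff_det by blast
  define At where "At t = (\<lambda>js. A js + t * (A1 js - A js))" for t
  define Bt where "Bt t = B + t *\<^sub>R (B1 - B)" for t
  obtain p where p: "(\<lambda>t. det (\<chi> i. eval_ctrl_expr k (At t) (Bt t) (E i))) = poly p"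
    using poly_det_eval_ctrl_expr_segment[of k "CARD('n) - 1" E A A1 B B1] assms(1) E
    unfolding At_def Bt_def by auto
  have "At 1 = A1" and "Bt 1 = B1"
    by (simp_all add: At_def Bt_def)
  with det_nz have "poly p 1 \<noteq> 0"
    using fun_cong[OF p, of 1] by simp
  then have "p \<noteq> 0" by auto
  then have "eventually (\<lambda>t. poly p t \<noteq> 0) (at_right 0)"
    by (rule eventually_poly_nonzero_at)
  moreover have "eventually (\<lambda>t. \<bar>t\<bar> * c < \<epsilon>) (at_right 0)" for c :: real
  proof -
    have "((\<lambda>t. \<bar>t\<bar> * c) \<longlongrightarrow> \<bar>0\<bar> * c) (at_right 0)"
      by (intro tendsto_mult tendsto_rabs tendsto_ident_at tendsto_const)
    then show ?thesis using assms(2) by (simp add: order_tendstoD(2))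
  qed
  ultimately have "eventually (\<lambda>t. poly p t \<noteq> 0 \<and> \<bar>t\<bar> * tnorm k (\<lambda>js. A1 js - A js) < \<epsilon>
      \<and> \<bar>t\<bar> * norm (B1 - B) < \<epsilon>) (at_right 0)"
    by (intro eventually_conj)
  from eventually_happens'[OF trivial_limit_at_right_real this]
  obtain t where "poly p t \<noteq> 0"
    and A_close: "\<bar>t\<bar> * tnorm k (\<lambda>js. A1 js - A js) < \<epsilon>"
    and B_close: "\<bar>t\<bar> * norm (B1 - B) < \<epsilon>"
    by blast
  have "tnorm k (\<lambda>js. At t js - A js) = \<bar>t\<bar> * tnorm k (\<lambda>js. A1 js - A js)"
    using tnorm_scale[of k t] by (simp add: At_def)
  moreover have "norm (Bt t - B) = \<bar>t\<bar> * norm (B1 - B)"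
    by (simp add: Bt_def)
  moreover have "det (\<chi> i. eval_ctrl_expr k (At t) (Bt t) (E i)) \<noteq> 0"
    using fun_cong[OF p, of t] \<open>poly p t \<noteq> 0\<close> by simp
  with E have "controllable k (At t) (Bt t)"
    by (auto simp: controllable_iff_det)
  ultimately show ?thesis
    using A_close B_close by (intro exI[of _ "At t"] exI[of _ "Bt t"]) simp
qed

theorem proposition5:
  fixes A :: "('n::finite) tensor" and B :: "real^'m::finite^'n" and k :: nat
  assumes "even k" and "k \<ge> 2"
  shows "(controllable k A B \<longrightarrow>
            (\<exists>\<epsilon>>0. \<forall>(A'::'n tensor) (B'::real^'m^'n).
               tnorm k (\<lambda>js. A' js - A js) < \<epsilon> \<and> norm (B' - B) < \<epsilon> \<longrightarrow> controllable k A' B'))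
       \<and> (\<not> controllable k A B \<longrightarrow>
            (\<forall>\<epsilon>>0. \<exists>(A'::'n tensor) (B'::real^'m^'n).
               tnorm k (\<lambda>js. A' js - A js) < \<epsilon> \<and> norm (B' - B) < \<epsilon> \<and> controllable k A' B'))"
  using controllable_open[of k A B] controllable_dense[OF assms(2)] assms(2) by auto

end
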